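(* For each prime number $p$, there are at least $p^2$ indecomposable and pairwise nonisomorphic metabelian groups of order $p^{41}$.
   Context: A group is metabelian if its commutator subgroup is contained in its center. A group is indecomposable if it is nontrivial and not a direct product of two nontrivial subgroups. *)

theory Defs
  imports "HOL-Algebra.Algebra"
begin

definition center :: "('a, 'b) monoid_scheme \<Rightarrow> 'a set" where
  "center G = {z \<in> carrier G. \<forall>x \<in> carrier G. z \<otimes>\<^bsub>G\<^esub> x = x \<otimes>\<^bsub>G\<^esub> z}"

definition metabelian :: "('a, 'b) monoid_scheme \<Rightarrow> bool" where
  "metabelian G \<longleftrightarrow> derived G (carrier G) \<subseteq> center G"

definition indecomposable :: "('a, 'b) monoid_scheme \<Rightarrow> bool" where
  "indecomposable G \<longleftrightarrow> carrier G \<noteq> {\<one>\<^bsub>G\<^esub>} \<and>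
     \<not> (\<exists>H K. H \<lhd> G \<and> K \<lhd> G \<and> H \<inter> K = {\<one>\<^bsub>G\<^esub>} \<and> H <#>\<^bsub>G\<^esub> K = carrier G
            \<and> H \<noteq> {\<one>\<^bsub>G\<^esub>} \<and> K \<noteq> {\<one>\<^bsub>G\<^esub>})"

end

theory Submission
  imports Defs
begin

text \<open>
  The groups are central products of 19 pairs \<open>x\<^sub>i, y\<^sub>i\<close> over the centre \<open>Z = (\<int>/p)\<^sup>3\<close>,
  of order \<open>p ^ (2 * 19 + 3)\<close>, whose only nontrivial commutators are the
  \<open>[x\<^sub>i, y\<^sub>i] \<in> {e\<^sub>0, e\<^sub>1, e\<^sub>2, e\<^sub>0 + e\<^sub>1 + e\<^sub>2, (1, a, b)}\<close>, the five points being used by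
  1, 2, 3, 4 and 9 pairs respectively.

  For central \<open>z\<close>, the set of \<open>x\<close> with \<open>[x, G] \<subseteq> \<langle>z\<rangle>\<close> has order \<open>p ^ (3 + 2 * r)\<close>, where
  \<open>r\<close> counts the pairs whose commutator lies on the line \<open>\<langle>z\<rangle>\<close>.  This is an isomorphism
  invariant, and the multiplicities are chosen so that \<open>r\<close> determines which of the five points lie
  on the line.  Hence an isomorphism maps each of the five lines to the corresponding one; being
  linear on \<open>Z\<close>, it acts on \<open>Z\<close> as a scalar, which forces \<open>(a, b)\<close> to agree modulo \<open>p\<close>.

  If \<open>G = H \<times> K\<close>, writing \<open>x\<^sub>i = h k\<close> shows that each commutator point lies in \<open>H\<close> or in \<open>K\<close>.
  Any three of \<open>e\<^sub>0, e\<^sub>1, e\<^sub>2, e\<^sub>0 + e\<^sub>1 + e\<^sub>2\<close> span \<open>Z\<close>, and a normal subgroup meeting \<open>Z\<close>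
  trivially is trivial; a two-two split is impossible because of the relation among the four points.
\<close>

definition commutator :: "('a, 'b) monoid_scheme \<Rightarrow> 'a \<Rightarrow> 'a \<Rightarrow> 'a" where
  "commutator G x y = x \<otimes>\<^bsub>G\<^esub> y \<otimes>\<^bsub>G\<^esub> inv\<^bsub>G\<^esub> x \<otimes>\<^bsub>G\<^esub> inv\<^bsub>G\<^esub> y"

text \<open>For central \<open>z\<close> this is the preimage of the centre of \<open>G / \<langle>z\<rangle>\<close>.\<close>
definition center_modulo :: "('a, 'b) monoid_scheme \<Rightarrow> 'a \<Rightarrow> 'a set" where
  "center_modulo G z =
     {x \<in> carrier G. \<forall>g \<in> carrier G. \<exists>k::int. commutator G x g = z [^]\<^bsub>G\<^esub> k}"

context group
begin

lemma commutator_closed [simp]: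
  "x \<in> carrier G \<Longrightarrow> y \<in> carrier G \<Longrightarrow> commutator G x y \<in> carrier G"
  by (simp add: commutator_def)

lemma commutator_eq_one_iff:
  assumes "x \<in> carrier G" "y \<in> carrier G"
  shows "commutator G x y = \<one> \<longleftrightarrow> x \<otimes> y = y \<otimes> x"
proof -
  have "commutator G x y = x \<otimes> y \<otimes> inv (y \<otimes> x)"
    using assms by (simp add: commutator_def inv_mult_group m_assoc)
  then show ?thesis
    using assms by (metis inv_closed m_closed inv_equality inv_inv r_inv)
qed

lemma normal_commutator_closed:
  assumes "N \<lhd> G" "h \<in> N" "g \<in> carrier G"
  shows "commutator G h g \<in> N"
proof -
  interpret normal N G by fact
  have "h \<otimes> (g \<otimes> inv h \<otimes> inv g) \<in> N"
    using assms(2,3) inv_op_closed2 by simp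
  then show ?thesis
    using assms(2,3) by (simp add: commutator_def m_assoc)
qed

lemma center_modulo_one: "center_modulo G \<one> = center G"
  by (auto simp: center_modulo_def center_def commutator_eq_one_iff)

lemma metabelianI:
  assumes "subgroup Z G" "Z \<subseteq> center G"
    and "\<And>x y. x \<in> carrier G \<Longrightarrow> y \<in> carrier G \<Longrightarrow> commutator G x y \<in> Z"
  shows "metabelian G"
proof -
  have "derived_set G (carrier G) \<subseteq> Z"
    using assms(3) by (auto simp: commutator_def)
  then show ?thesis
    using generate_subgroup_incl[OF _ assms(1)] assms(2)
    by (auto simp: metabelian_def derived_def)
qed

end

lemma (in group_hom) hom_commutator:
  "x \<in> carrier G \<Longrightarrow> y \<in> carrier G \<Longrightarrow> h (commutator G x y) = commutator H (h x) (h y)"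
  by (simp add: commutator_def)

lemma iso_center:
  assumes "group G" "group H" "\<phi> \<in> iso G H" "z \<in> center G"
  shows "\<phi> z \<in> center H"
  unfolding center_def
proof (intro CollectI conjI ballI)
  interpret group_hom G H \<phi>
    using assms by (simp add: group_hom_def group_hom_axioms_def iso_def)
  have z: "z \<in> carrier G" "\<And>x. x \<in> carrier G \<Longrightarrow> z \<otimes>\<^bsub>G\<^esub> x = x \<otimes>\<^bsub>G\<^esub> z"
    using assms(4) by (auto simp: center_def)
  then show "\<phi> z \<in> carrier H"
    by simp
  fix y assume "y \<in> carrier H"
  then obtain x where "x \<in> carrier G" "y = \<phi> x"
    using assms(3) by (auto simp: iso_def bij_betw_def)
  then show "\<phi> z \<otimes>\<^bsub>H\<^esub> y = y \<otimes>\<^bsub>H\<^esub> \<phi> z"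
    using z by (metis hom_mult)
qed

lemma iso_commutator_eq_pow_iff:
  assumes "group G" "group H" "\<phi> \<in> iso G H" "x \<in> carrier G" "g \<in> carrier G" "z \<in> carrier G"
  shows "commutator H (\<phi> x) (\<phi> g) = \<phi> z [^]\<^bsub>H\<^esub> (k::int) \<longleftrightarrow> commutator G x g = z [^]\<^bsub>G\<^esub> k"
proof -
  interpret group_hom G H \<phi>
    using assms by (simp add: group_hom_def group_hom_axioms_def iso_def)
  have "commutator H (\<phi> x) (\<phi> g) = \<phi> (commutator G x g)" "\<phi> z [^]\<^bsub>H\<^esub> k = \<phi> (z [^]\<^bsub>G\<^esub> k)"
    using assms(4-6) by (simp_all add: hom_commutator hom_int_pow)
  moreover have "inj_on \<phi> (carrier G)"
    using assms(3) by (simp add: iso_def bij_betw_def)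
  ultimately show ?thesis
    using assms(4-6) by (simp add: inj_on_eq_iff group.commutator_closed[OF assms(1)])
qed

lemma iso_image_center_modulo:
  assumes "group G" "group H" "\<phi> \<in> iso G H" "z \<in> carrier G"
  shows "\<phi> ` center_modulo G z = center_modulo H (\<phi> z)"
proof -
  note comm_iff = iso_commutator_eq_pow_iff[OF assms(1-3) _ _ assms(4)]
  have hom: "\<phi> \<in> carrier G \<rightarrow> carrier H" and onto: "\<phi> ` carrier G = carrier H"
    using assms(3) by (auto simp: iso_def hom_def bij_betw_def)
  show ?thesis
  proof (intro equalityI subsetI)
    fix y assume "y \<in> \<phi> ` center_modulo G z"
    then obtain x where x: "y = \<phi> x" "x \<in> carrier G"
      and comm_x: "\<And>g. g \<in> carrier G \<Longrightarrow> \<exists>k::int. commutator G x g = z [^]\<^bsub>G\<^esub> k"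
      by (auto simp: center_modulo_def)
    have "\<exists>k::int. commutator H y h = \<phi> z [^]\<^bsub>H\<^esub> k" if h: "h \<in> carrier H" for h
    proof -
      obtain g where g: "g \<in> carrier G" "h = \<phi> g"
        using h onto by blast
      from comm_x[OF g(1)] obtain k :: int where "commutator G x g = z [^]\<^bsub>G\<^esub> k" ..
      then have "commutator H y h = \<phi> z [^]\<^bsub>H\<^esub> k"
        using comm_iff[OF x(2) g(1), of k] x(1) g(2) by simp
      then show ?thesis ..
    qed
    then show "y \<in> center_modulo H (\<phi> z)"
      using x hom by (auto simp: center_modulo_def)
  next
    fix y assume y: "y \<in> center_modulo H (\<phi> z)"
    then obtain x where x: "y = \<phi> x" "x \<in> carrier G"
      using onto by (auto simp: center_modulo_def)
    have "\<exists>k::int. commutator G x g = z [^]\<^bsub>G\<^esub> k" if g: "g \<in> carrier G" for g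
    proof -
      have "\<phi> g \<in> carrier H"
        using g hom by auto
      then obtain k :: int where "commutator H y (\<phi> g) = \<phi> z [^]\<^bsub>H\<^esub> k"
        using y unfolding center_modulo_def by blast
      then have "commutator G x g = z [^]\<^bsub>G\<^esub> k"
        using comm_iff[OF x(2) g, of k] x(1) by simp
      then show ?thesis ..
    qed
    then show "y \<in> \<phi> ` center_modulo G z"
      using x by (simp add: center_modulo_def)
  qed
qed

lemma iso_card_center_modulo:
  assumes "group G" "group H" "\<phi> \<in> iso G H" "z \<in> carrier G"
  shows "card (center_modulo H (\<phi> z)) = card (center_modulo G z)"
proof -
  have "inj_on \<phi> (center_modulo G z)"
    using assms(3) by (auto simp: iso_def bij_betw_def center_modulo_def intro: inj_on_subset)
  then show ?thesis
    by (simp add: card_image flip: iso_image_center_modulo[OF assms])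
qed

lemma prod_lessThan_double:
  "(\<Prod>k < 2 * l. F k) = (\<Prod>i < l. F (2 * i) * F (2 * i + 1))"
  for F :: "nat \<Rightarrow> 'a::comm_monoid_mult"
  by (induction l) (simp_all add: mult.assoc)

lemma mod_prime_inverse:
  fixes t :: int
  assumes "Factorial_Ring.prime p" "t mod int p \<noteq> 0"
  shows "\<exists>s. (s * t) mod int p = 1"
proof -
  have "coprime (int p) t"
    using assms by (simp add: prime_imp_coprime dvd_eq_mod_eq_0)
  then obtain u v where "u * t + v * int p = 1"
    using bezout_int[of t "int p"] by (auto simp: coprime_iff_gcd_eq_1 gcd.commute)
  then have "u * t = 1 + (- v) * int p"
    by simp
  then have "(u * t) mod int p = (1 + (- v) * int p) mod int p"
    by (rule arg_cong)
  also have "\<dots> = 1"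
    using assms(1) prime_gt_1_nat by (simp only: mod_mult_self1) simp
  finally show ?thesis
    by blast
qed

lemma all_less_three: "(\<forall>c<3. P c) \<longleftrightarrow> P 0 \<and> P 1 \<and> P (2::nat)"
  by (auto simp: numeral_3_eq_3 numeral_2_eq_2 less_Suc_eq)

text \<open>
  \<open>grp w\<close> models \<open>(\<int>/p) ^ (2 * n + m)\<close> with coordinates \<open>2i, 2i + 1\<close> (\<open>i < n\<close>) for the pair \<open>x\<^sub>i, y\<^sub>i\<close> and
  the last \<open>m\<close> coordinates for the centre; the product adds the central correction
  \<open>cocycle w\<close>, so that \<open>[x\<^sub>i, y\<^sub>i] = w i\<close>.  Elements are vectors of residues, stored as natural
  numbers via \<open>to_nat\<close> so that the carrier type is \<open>nat\<close>.
\<close>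
locale pair_group =
  fixes p n m :: nat
  assumes prime_p: "Factorial_Ring.prime p"
begin

lemma p_gt_1: "int p > 1"
  using prime_gt_1_nat[OF prime_p] by simp

definition encode :: "(nat \<Rightarrow> int) \<Rightarrow> nat" where
  "encode f = to_nat (map (\<lambda>k. f k mod int p) [0..<2 * n + m])"

definition coord :: "nat \<Rightarrow> nat \<Rightarrow> int" where
  "coord x k = (from_nat x :: int list) ! k"

definition cocycle :: "(nat \<Rightarrow> nat \<Rightarrow> int) \<Rightarrow> (nat \<Rightarrow> int) \<Rightarrow> (nat \<Rightarrow> int) \<Rightarrow> nat \<Rightarrow> int" where
  "cocycle w f g c = (\<Sum>i<n. f (2 * i) * g (2 * i + 1) * w i c)"

definition vec_mult :: "(nat \<Rightarrow> nat \<Rightarrow> int) \<Rightarrow> (nat \<Rightarrow> int) \<Rightarrow> (nat \<Rightarrow> int) \<Rightarrow> nat \<Rightarrow> int" where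
  "vec_mult w f g k = f k + g k + (if k < 2 * n then 0 else cocycle w f g (k - 2 * n))"

definition vec_inv :: "(nat \<Rightarrow> nat \<Rightarrow> int) \<Rightarrow> (nat \<Rightarrow> int) \<Rightarrow> nat \<Rightarrow> int" where
  "vec_inv w f k = - f k + (if k < 2 * n then 0 else cocycle w f f (k - 2 * n))"

definition grp :: "(nat \<Rightarrow> nat \<Rightarrow> int) \<Rightarrow> nat monoid" where
  "grp w = \<lparr>carrier = range encode, monoid.mult = \<lambda>x y. encode (vec_mult w (coord x) (coord y)),
     one = encode (\<lambda>_. 0)\<rparr>"

lemma coord_encode [simp]: "k < 2 * n + m \<Longrightarrow> coord (encode f) k = f k mod int p"
  by (simp add: coord_def encode_def)

lemma encode_eq_iff: "encode f = encode g \<longleftrightarrow> (\<forall>k < 2 * n + m. f k mod int p = g k mod int p)"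
proof -
  have "encode f = encode g \<longleftrightarrow>
      map (\<lambda>k. f k mod int p) [0..<2 * n + m] = map (\<lambda>k. g k mod int p) [0..<2 * n + m]"
    by (simp add: encode_def inj_eq)
  then show ?thesis
    by (auto simp: map_eq_conv)
qed

lemma cocycle_mod_cong:
  assumes "\<And>k. k < 2 * n \<Longrightarrow> f k mod int p = f' k mod int p"
    and "\<And>k. k < 2 * n \<Longrightarrow> g k mod int p = g' k mod int p"
  shows "cocycle w f g c mod int p = cocycle w f' g' c mod int p"
proof -
  have "(f (2 * i) * g (2 * i + 1) * w i c) mod int p
      = (f' (2 * i) * g' (2 * i + 1) * w i c) mod int p" if "i < n" for i
    using that by (intro mod_mult_cong assms refl) simp_all
  then have "(\<Sum>i<n. (f (2 * i) * g (2 * i + 1) * w i c) mod int p)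
      = (\<Sum>i<n. (f' (2 * i) * g' (2 * i + 1) * w i c) mod int p)"
    by (intro sum.cong) simp_all
  then have "(\<Sum>i<n. (f (2 * i) * g (2 * i + 1) * w i c) mod int p) mod int p
      = (\<Sum>i<n. (f' (2 * i) * g' (2 * i + 1) * w i c) mod int p) mod int p"
    by (rule arg_cong)
  then show ?thesis
    unfolding cocycle_def mod_sum_eq .
qed

lemma carrier_grp: "carrier (grp w) = range encode"
  by (simp add: grp_def)

lemma encode_in_carrier [simp]: "encode f \<in> carrier (grp w)"
  by (simp add: carrier_grp)

lemma one_grp: "\<one>\<^bsub>grp w\<^esub> = encode (\<lambda>_. 0)"
  by (simp add: grp_def)

lemma encode_mult: "encode f \<otimes>\<^bsub>grp w\<^esub> encode g = encode (vec_mult w f g)"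
proof -
  have cocycle_coord: "cocycle w (coord (encode f)) (coord (encode g)) c mod int p = cocycle w f g c mod int p" for c
    by (rule cocycle_mod_cong) simp_all
  have "vec_mult w (coord (encode f)) (coord (encode g)) k mod int p = vec_mult w f g k mod int p"
    if "k < 2 * n + m" for k
    using that cocycle_coord unfolding vec_mult_def by (auto intro!: mod_add_cong)
  then show ?thesis
    by (simp add: grp_def encode_eq_iff)
qed

lemma cocycle_vec_mult_left: "cocycle w (vec_mult w f g) h c = cocycle w f h c + cocycle w g h c"
  unfolding cocycle_def sum.distrib[symmetric]
  by (intro sum.cong) (auto simp: vec_mult_def algebra_simps)

lemma cocycle_vec_mult_right: "cocycle w f (vec_mult w g h) c = cocycle w f g c + cocycle w f h c"
  unfolding cocycle_def sum.distrib[symmetric]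
  by (intro sum.cong) (auto simp: vec_mult_def algebra_simps)

lemma cocycle_vec_inv_left: "cocycle w (vec_inv w f) h c = - cocycle w f h c"
  unfolding cocycle_def sum_negf[symmetric]
  by (intro sum.cong) (auto simp: vec_inv_def)

lemma cocycle_vec_inv_right: "cocycle w h (vec_inv w f) c = - cocycle w h f c"
  unfolding cocycle_def sum_negf[symmetric]
  by (intro sum.cong) (auto simp: vec_inv_def)

lemma cocycle_zero_left:
  "(\<And>k. k < 2 * n \<Longrightarrow> f k = 0) \<Longrightarrow> cocycle w f g c = 0"
  unfolding cocycle_def by (intro sum.neutral) auto

lemma cocycle_zero_right:
  "(\<And>k. k < 2 * n \<Longrightarrow> g k = 0) \<Longrightarrow> cocycle w f g c = 0"
  unfolding cocycle_def by (intro sum.neutral) auto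

lemma vec_mult_assoc: "vec_mult w (vec_mult w f g) h = vec_mult w f (vec_mult w g h)"
  by (rule ext) (simp add: vec_mult_def cocycle_vec_mult_left cocycle_vec_mult_right)

lemma vec_mult_zero_left: "vec_mult w (\<lambda>_. 0) f = f"
  by (rule ext) (simp add: vec_mult_def cocycle_zero_left)

lemma vec_mult_vec_inv_left: "vec_mult w (vec_inv w f) f = (\<lambda>_. 0)"
  by (rule ext) (simp add: vec_mult_def vec_inv_def cocycle_vec_inv_left)

lemma group_grp: "group (grp w)"
proof (rule groupI)
  fix x y z
  assume "x \<in> carrier (grp w)" "y \<in> carrier (grp w)" "z \<in> carrier (grp w)"
  then show "x \<otimes>\<^bsub>grp w\<^esub> y \<otimes>\<^bsub>grp w\<^esub> z = x \<otimes>\<^bsub>grp w\<^esub> (y \<otimes>\<^bsub>grp w\<^esub> z)"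
    by (auto simp: carrier_grp encode_mult vec_mult_assoc)
next
  fix x assume "x \<in> carrier (grp w)"
  then obtain f where "x = encode f"
    by (auto simp: carrier_grp)
  then show "\<exists>y \<in> carrier (grp w). y \<otimes>\<^bsub>grp w\<^esub> x = \<one>\<^bsub>grp w\<^esub>"
    by (intro bexI[of _ "encode (vec_inv w f)"]) (simp_all add: one_grp encode_mult vec_mult_vec_inv_left)
qed (auto simp: carrier_grp one_grp encode_mult vec_mult_zero_left)

lemma inv_encode: "inv\<^bsub>grp w\<^esub> encode f = encode (vec_inv w f)"
  by (rule group.inv_equality[OF group_grp]) (simp_all add: one_grp encode_mult vec_mult_vec_inv_left)

definition central :: "(nat \<Rightarrow> int) \<Rightarrow> nat" where
  "central u = encode (\<lambda>k. if k < 2 * n then 0 else u (k - 2 * n))"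

lemma central_in_carrier [simp]: "central u \<in> carrier (grp w)"
  by (simp add: central_def carrier_grp)

lemma central_eq_iff: "central u = central v \<longleftrightarrow> (\<forall>c < m. u c mod int p = v c mod int p)"
proof
  assume "central u = central v"
  then show "\<forall>c < m. u c mod int p = v c mod int p"
    by (auto simp: central_def encode_eq_iff dest: spec[where x = "_ + 2 * n"])
next
  assume "\<forall>c < m. u c mod int p = v c mod int p"
  then show "central u = central v"
    by (auto simp: central_def encode_eq_iff)
qed

lemma one_eq_central: "\<one>\<^bsub>grp w\<^esub> = central (\<lambda>_. 0)"
  by (simp add: one_grp central_def encode_eq_iff)

lemma central_mult: "central u \<otimes>\<^bsub>grp w\<^esub> central v = central (\<lambda>c. u c + v c)"
  unfolding central_def encode_mult
  by (rule arg_cong[where f = encode], rule ext) (simp add: vec_mult_def cocycle_zero_left)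

lemma central_commute: "x \<in> carrier (grp w) \<Longrightarrow> central u \<otimes>\<^bsub>grp w\<^esub> x = x \<otimes>\<^bsub>grp w\<^esub> central u"
  unfolding central_def
  by (auto simp: carrier_grp encode_mult intro!: arg_cong[where f = encode] ext)
    (simp add: vec_mult_def cocycle_zero_left cocycle_zero_right)

lemma central_inv: "inv\<^bsub>grp w\<^esub> central u = central (\<lambda>c. - u c)"
  by (rule group.inv_equality[OF group_grp]) (simp_all add: central_mult one_eq_central)

lemma central_nat_pow: "central u [^]\<^bsub>grp w\<^esub> (k::nat) = central (\<lambda>c. int k * u c)"
  by (induction k) (simp_all add: one_eq_central central_mult algebra_simps)

lemma central_int_pow: "central u [^]\<^bsub>grp w\<^esub> (k::int) = central (\<lambda>c. k * u c)"
proof (cases "k \<ge> 0")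
  case True
  then obtain j where "k = int j"
    using nonneg_int_cases by blast
  then show ?thesis
    by (simp add: int_pow_int central_nat_pow)
next
  case False
  then obtain j where "k = - int j"
    using nonpos_int_cases by (metis linorder_linear)
  then show ?thesis
    by (simp add: group.int_pow_neg_int[OF group_grp] central_nat_pow central_inv)
qed

lemma central_subgroup: "subgroup (range central) (grp w)"
  by (rule group.subgroupI[OF group_grp]) (auto simp: central_inv central_mult)

lemma range_central_subset_center: "range central \<subseteq> center (grp w)"
  using central_commute by (auto simp: center_def)

lemma commutator_encode:
  "commutator (grp w) (encode f) (encode g) = central (\<lambda>c. cocycle w f g c - cocycle w g f c)"
  unfolding commutator_def inv_encode encode_mult central_def
  by (rule arg_cong[where f = encode], rule ext)
    (simp add: vec_mult_def vec_inv_def cocycle_vec_mult_left cocycle_vec_inv_left cocycle_vec_inv_right)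

lemma metabelian_grp: "metabelian (grp w)"
proof -
  interpret group "grp w"
    by (rule group_grp)
  show ?thesis
    by (rule metabelianI[OF central_subgroup range_central_subset_center]) (auto simp: carrier_grp commutator_encode)
qed

lemma card_encode_PiE:
  assumes "\<And>k. A k \<subseteq> {0..<int p}"
  shows "card (encode ` (\<Pi>\<^sub>E k \<in> {..<2 * n + m}. A k)) = (\<Prod>k < 2 * n + m. card (A k))"
proof -
  have "inj_on encode (\<Pi>\<^sub>E k \<in> {..<2 * n + m}. A k)"
  proof (rule inj_onI)
    fix f g
    assume f: "f \<in> (\<Pi>\<^sub>E k \<in> {..<2 * n + m}. A k)" and g: "g \<in> (\<Pi>\<^sub>E k \<in> {..<2 * n + m}. A k)"
      and "encode f = encode g"
    then have "f k mod int p = g k mod int p" if "k < 2 * n + m" for k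
      using that by (simp add: encode_eq_iff)
    moreover have "f k \<in> {0..<int p}" "g k \<in> {0..<int p}" if "k < 2 * n + m" for k
      using that f g assms[of k] by (meson PiE_mem lessThan_iff subsetD)+
    ultimately show "f = g"
      using f g by (intro PiE_ext) auto
  qed
  then show ?thesis
    by (simp add: card_image card_PiE)
qed

lemma range_encode: "range encode = encode ` (\<Pi>\<^sub>E k \<in> {..<2 * n + m}. {0..<int p})"
proof -
  have "encode f = encode (restrict (\<lambda>k. f k mod int p) {..<2 * n + m})" for f
    by (simp add: encode_eq_iff)
  moreover have "restrict (\<lambda>k. f k mod int p) {..<2 * n + m} \<in> (\<Pi>\<^sub>E k \<in> {..<2 * n + m}. {0..<int p})" for f
    using p_gt_1 by auto
  ultimately show ?thesis
    by blast
qed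

lemma order_grp: "order (grp w) = p ^ (2 * n + m)"
  unfolding order_def carrier_grp range_encode
  by (subst card_encode_PiE) simp_all

lemma central_scale_cong: "central u = central v \<Longrightarrow> central (\<lambda>c. k * u c) = central (\<lambda>c. k * v c)"
  unfolding central_eq_iff by (blast intro: mod_mult_cong)

lemma central_scale_mod_cong: "k mod int p = k' mod int p \<Longrightarrow> central (\<lambda>c. k * u c) = central (\<lambda>c. k' * u c)"
  unfolding central_eq_iff by (blast intro: mod_mult_cong)

lemma central_scale_zero: "t mod int p = 0 \<Longrightarrow> central (\<lambda>c. t * u c) = central (\<lambda>_. 0)"
  by (auto simp: central_eq_iff dvd_eq_mod_eq_0[symmetric])

lemma central_scale_inverse:
  assumes "t mod int p \<noteq> 0"
  obtains s where "\<And>u. central (\<lambda>c. s * (t * u c)) = central u"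
proof -
  obtain s where s: "(s * t) mod int p = 1"
    using mod_prime_inverse[OF prime_p assms] by blast
  have "(s * t * x) mod int p = x mod int p" for x
    by (simp add: mod_mult_left_eq[of "s * t" "int p" x, symmetric] s)
  then have "central (\<lambda>c. s * (t * u c)) = central u" for u
    by (simp add: central_eq_iff mult.assoc[symmetric])
  then show ?thesis
    using that by blast
qed

definition in_span :: "(nat \<Rightarrow> int) \<Rightarrow> (nat \<Rightarrow> int) \<Rightarrow> bool" where
  "in_span u v \<longleftrightarrow> (\<exists>k. central v = central (\<lambda>c. k * u c))"

lemma in_span_self: "in_span u u"
  unfolding in_span_def by (rule exI[of _ 1]) simp

lemma in_span_zero: "in_span u (\<lambda>_. 0)"
  unfolding in_span_def by (rule exI[of _ 0]) simp

lemma in_span_scale: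
  assumes "in_span u v"
  shows "in_span u (\<lambda>c. t * v c)"
proof -
  obtain k where "central v = central (\<lambda>c. k * u c)"
    using assms by (auto simp: in_span_def)
  then have "central (\<lambda>c. t * v c) = central (\<lambda>c. (t * k) * u c)"
    unfolding mult.assoc by (rule central_scale_cong)
  then show ?thesis
    unfolding in_span_def by blast
qed

lemma in_span_scale_zero: "t mod int p = 0 \<Longrightarrow> in_span u (\<lambda>c. t * v c)"
  unfolding in_span_def by (rule exI[of _ 0]) (simp add: central_scale_zero)

lemma in_span_scale_cancel:
  assumes "t mod int p \<noteq> 0" "in_span u (\<lambda>c. t * v c)"
  shows "in_span u v"
proof -
  obtain s where s: "\<And>u. central (\<lambda>c. s * (t * u c)) = central u"
    using central_scale_inverse[OF assms(1)] by blast
  from assms(2) obtain k where "central (\<lambda>c. t * v c) = central (\<lambda>c. k * u c)"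
    by (auto simp: in_span_def)
  then have "central (\<lambda>c. s * (t * v c)) = central (\<lambda>c. s * (k * u c))"
    by (rule central_scale_cong)
  then have "central v = central (\<lambda>c. (s * k) * u c)"
    using s by (simp add: mult.assoc)
  then show ?thesis
    by (auto simp: in_span_def)
qed

lemma in_span_add:
  assumes "in_span u v" "in_span u v'"
  shows "in_span u (\<lambda>c. v c + v' c)"
proof -
  obtain k k' where "central v = central (\<lambda>c. k * u c)" "central v' = central (\<lambda>c. k' * u c)"
    using assms by (auto simp: in_span_def)
  then have "central (\<lambda>c. v c + v' c) = central (\<lambda>c. (k + k') * u c)"
    unfolding central_eq_iff distrib_right by (blast intro: mod_add_cong)
  then show ?thesis
    unfolding in_span_def by blast
qed

lemma in_span_sum:
  "finite A \<Longrightarrow> (\<And>i. i \<in> A \<Longrightarrow> in_span u (v i)) \<Longrightarrow> in_span u (\<lambda>c. \<Sum>i\<in>A. v i c)"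
  by (induction A rule: finite_induct) (simp_all add: in_span_zero in_span_add)

lemma in_span_trans:
  assumes "in_span u v" "in_span v x"
  shows "in_span u x"
proof -
  obtain k k' where "central v = central (\<lambda>c. k * u c)" "central x = central (\<lambda>c. k' * v c)"
    using assms by (auto simp: in_span_def)
  then have "central x = central (\<lambda>c. (k' * k) * u c)"
    using central_scale_cong[of v "\<lambda>c. k * u c" k'] by (simp add: mult.assoc)
  then show ?thesis
    unfolding in_span_def by blast
qed

lemma in_span_cong_left:
  assumes "central u = central u'" "in_span u v"
  shows "in_span u' v"
proof -
  obtain k where "central v = central (\<lambda>c. k * u c)"
    using assms(2) by (auto simp: in_span_def)
  then have "central v = central (\<lambda>c. k * u' c)"
    using central_scale_cong[OF assms(1), of k] by simp
  then show ?thesis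
    unfolding in_span_def by blast
qed

lemma in_span_sym:
  assumes "central v \<noteq> central (\<lambda>_. 0)" "in_span u v"
  shows "in_span v u"
proof -
  obtain k where k: "central v = central (\<lambda>c. k * u c)"
    using assms(2) by (auto simp: in_span_def)
  have "k mod int p \<noteq> 0"
  proof
    assume "k mod int p = 0"
    then show False
      using assms(1) k central_scale_zero by simp
  qed
  then obtain s where s: "\<And>u. central (\<lambda>c. s * (k * u c)) = central u"
    using central_scale_inverse by blast
  have "central u = central (\<lambda>c. s * v c)"
    using central_scale_cong[OF k, where k = s] s by simp
  then show ?thesis
    by (auto simp: in_span_def)
qed

definition unit_vec :: "nat \<Rightarrow> nat \<Rightarrow> int" where
  "unit_vec j k = (if k = j then 1 else 0)"

lemma cocycle_unit_odd:
  assumes "i < n"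
  shows "cocycle w f (unit_vec (2 * i + 1)) c = f (2 * i) * w i c"
    and "cocycle w (unit_vec (2 * i + 1)) f c = 0"
proof -
  have "cocycle w f (unit_vec (2 * i + 1)) c = (\<Sum>i'<n. if i' = i then f (2 * i) * w i c else 0)"
    unfolding cocycle_def unit_vec_def by (intro sum.cong) auto
  then show "cocycle w f (unit_vec (2 * i + 1)) c = f (2 * i) * w i c"
    using assms by simp
  show "cocycle w (unit_vec (2 * i + 1)) f c = 0"
    unfolding cocycle_def unit_vec_def by (intro sum.neutral) (simp add: double_not_eq_Suc_double)
qed

lemma cocycle_unit_even:
  assumes "i < n"
  shows "cocycle w (unit_vec (2 * i)) f c = f (2 * i + 1) * w i c"
    and "cocycle w f (unit_vec (2 * i)) c = 0"
proof -
  have "cocycle w (unit_vec (2 * i)) f c = (\<Sum>i'<n. if i' = i then f (2 * i + 1) * w i c else 0)"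
    unfolding cocycle_def unit_vec_def by (intro sum.cong) auto
  then show "cocycle w (unit_vec (2 * i)) f c = f (2 * i + 1) * w i c"
    using assms by simp
  show "cocycle w f (unit_vec (2 * i)) c = 0"
    unfolding cocycle_def unit_vec_def by (intro sum.neutral) (simp add: Suc_double_not_eq_double)
qed

lemma commutator_unit_odd:
  "i < n \<Longrightarrow> commutator (grp w) (encode f) (encode (unit_vec (2 * i + 1))) = central (\<lambda>c. f (2 * i) * w i c)"
  using cocycle_unit_odd[of i w f] by (simp add: commutator_encode)

lemma cocycle_alternation:
  "cocycle w f g c - cocycle w g f c = (\<Sum>i<n. (f (2 * i) * g (2 * i + 1) - g (2 * i) * f (2 * i + 1)) * w i c)"
  unfolding cocycle_def sum_subtractf[symmetric] by (intro sum.cong) (auto simp: algebra_simps)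

lemma encode_in_center_modulo_iff_in_span:
  "encode f \<in> center_modulo (grp w) (central u) \<longleftrightarrow>
     (\<forall>g. in_span u (\<lambda>c. cocycle w f g c - cocycle w g f c))"
  by (auto simp: center_modulo_def carrier_grp commutator_encode central_int_pow in_span_def)

lemma pair_vanishes_if_commutators_in_span:
  assumes "\<forall>g. in_span u (\<lambda>c. cocycle w f g c - cocycle w g f c)" "i < n" "\<not> in_span u (w i)"
  shows "f (2 * i) mod int p = 0 \<and> f (2 * i + 1) mod int p = 0"
proof -
  have "in_span u (\<lambda>c. f (2 * i) * w i c)"
    using assms(1)[rule_format, of "unit_vec (2 * i + 1)"] cocycle_unit_odd[OF assms(2), of w f] by simp
  then have even: "f (2 * i) mod int p = 0"
    using in_span_scale_cancel assms(3) by blast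
  have "in_span u (\<lambda>c. (- f (2 * i + 1)) * w i c)"
    using assms(1)[rule_format, of "unit_vec (2 * i)"] cocycle_unit_even[OF assms(2), of w f] by simp
  then have "(- f (2 * i + 1)) mod int p = 0"
    using in_span_scale_cancel assms(3) by blast
  with even show ?thesis
    by (simp add: dvd_eq_mod_eq_0[symmetric])
qed

lemma commutators_in_span_if_pairs_vanish:
  assumes "\<forall>i<n. \<not> in_span u (w i) \<longrightarrow> f (2 * i) mod int p = 0 \<and> f (2 * i + 1) mod int p = 0"
  shows "in_span u (\<lambda>c. cocycle w f g c - cocycle w g f c)"
proof -
  have "in_span u (\<lambda>c. (f (2 * i) * g (2 * i + 1) - g (2 * i) * f (2 * i + 1)) * w i c)"
    if "i < n" for i
  proof (cases "in_span u (w i)")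
    case True
    then show ?thesis
      by (rule in_span_scale)
  next
    case False
    then have "int p dvd f (2 * i)" "int p dvd f (2 * i + 1)"
      using assms that by (simp_all add: dvd_eq_mod_eq_0)
    then have "(f (2 * i) * g (2 * i + 1) - g (2 * i) * f (2 * i + 1)) mod int p = 0"
      by (simp add: dvd_eq_mod_eq_0[symmetric])
    then show ?thesis
      by (rule in_span_scale_zero)
  qed
  then show ?thesis
    unfolding cocycle_alternation by (intro in_span_sum) simp_all
qed

lemma encode_in_center_modulo_iff:
  "encode f \<in> center_modulo (grp w) (central u) \<longleftrightarrow>
     (\<forall>i<n. \<not> in_span u (w i) \<longrightarrow> f (2 * i) mod int p = 0 \<and> f (2 * i + 1) mod int p = 0)"
  using encode_in_center_modulo_iff_in_span pair_vanishes_if_commutators_in_span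
    commutators_in_span_if_pairs_vanish by blast

lemma center_grp:
  assumes "\<And>i. i < n \<Longrightarrow> central (w i) \<noteq> central (\<lambda>_. 0)"
  shows "center (grp w) = range central"
proof -
  interpret group "grp w"
    by (rule group_grp)
  have not_in_span: "\<not> in_span (\<lambda>_. 0) (w i)" if "i < n" for i
    using assms[OF that] by (simp add: in_span_def)
  have "center (grp w) = center_modulo (grp w) \<one>\<^bsub>grp w\<^esub>"
    by (rule center_modulo_one[symmetric])
  also have "\<dots> = center_modulo (grp w) (central (\<lambda>_. 0))"
    by (simp only: one_eq_central)
  also have "\<dots> \<subseteq> range central"
  proof
    fix x assume x: "x \<in> center_modulo (grp w) (central (\<lambda>_. 0))"
    then obtain f where f: "x = encode f"
      by (auto simp: center_modulo_def carrier_grp)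
    have "f k mod int p = 0" if "k < 2 * n" for k
    proof -
      have "k = 2 * (k div 2) \<or> k = 2 * (k div 2) + 1" "k div 2 < n"
        using that by auto
      then show ?thesis
        using x not_in_span unfolding f encode_in_center_modulo_iff by metis
    qed
    then show "x \<in> range central"
      unfolding f by (auto simp: central_def encode_eq_iff intro!: image_eqI[of _ _ "\<lambda>c. f (c + 2 * n)"])
  qed
  finally show ?thesis
    using range_central_subset_center by blast
qed

definition residues_mod_span :: "(nat \<Rightarrow> nat \<Rightarrow> int) \<Rightarrow> (nat \<Rightarrow> int) \<Rightarrow> nat \<Rightarrow> int set" where
  "residues_mod_span w u k =
     (if k < 2 * n \<and> \<not> in_span u (w (k div 2)) then {0} else {0..<int p})"

lemma center_modulo_eq_PiE:
  "center_modulo (grp w) (central u) = encode ` (\<Pi>\<^sub>E k \<in> {..<2 * n + m}. residues_mod_span w u k)"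
proof (intro equalityI subsetI)
  fix x assume x: "x \<in> center_modulo (grp w) (central u)"
  then obtain f where f: "x = encode f"
    by (auto simp: center_modulo_def carrier_grp)
  have vanish: "f (2 * i) mod int p = 0 \<and> f (2 * i + 1) mod int p = 0"
    if "i < n" "\<not> in_span u (w i)" for i
    using x that unfolding f encode_in_center_modulo_iff by blast
  have "f k mod int p \<in> residues_mod_span w u k" for k
  proof (cases "k < 2 * n \<and> \<not> in_span u (w (k div 2))")
    case True
    then have "k = 2 * (k div 2) \<or> k = 2 * (k div 2) + 1" "k div 2 < n"
      by auto
    then have "f k mod int p = 0"
      using vanish[of "k div 2"] True by metis
    then show ?thesis
      using True by (simp add: residues_mod_span_def)
  next
    case False
    then have "residues_mod_span w u k = {0..<int p}"
      by (simp only: residues_mod_span_def if_not_P if_False)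
    then show ?thesis
      using p_gt_1 by simp
  qed
  then have "restrict (\<lambda>k. f k mod int p) {..<2 * n + m}
      \<in> (\<Pi>\<^sub>E k \<in> {..<2 * n + m}. residues_mod_span w u k)"
    by simp
  moreover have "x = encode (restrict (\<lambda>k. f k mod int p) {..<2 * n + m})"
    by (simp add: f encode_eq_iff)
  ultimately show "x \<in> encode ` (\<Pi>\<^sub>E k \<in> {..<2 * n + m}. residues_mod_span w u k)"
    by blast
next
  fix x assume "x \<in> encode ` (\<Pi>\<^sub>E k \<in> {..<2 * n + m}. residues_mod_span w u k)"
  then obtain g where g: "g \<in> (\<Pi>\<^sub>E k \<in> {..<2 * n + m}. residues_mod_span w u k)" and x: "x = encode g"
    by blast
  have "g (2 * i) = 0 \<and> g (2 * i + 1) = 0" if "i < n" "\<not> in_span u (w i)" for i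
    using that g[THEN PiE_mem, of "2 * i"] g[THEN PiE_mem, of "2 * i + 1"]
    by (simp add: residues_mod_span_def)
  then show "x \<in> center_modulo (grp w) (central u)"
    unfolding x encode_in_center_modulo_iff by simp
qed

lemma card_center_modulo:
  "card (center_modulo (grp w) (central u)) = p ^ (m + 2 * card {i. i < n \<and> in_span u (w i)})"
proof -
  let ?A = "residues_mod_span w u"
  have "card (center_modulo (grp w) (central u)) = (\<Prod>k < 2 * n + m. card (?A k))"
    unfolding center_modulo_eq_PiE using p_gt_1 by (simp add: card_encode_PiE residues_mod_span_def)
  also have "\<dots> = (\<Prod>k < 2 * n. card (?A k)) * (\<Prod>k \<in> {2 * n..<2 * n + m}. card (?A k))"
    by (simp add: lessThan_atLeast0 prod.atLeastLessThan_concat)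
  also have "(\<Prod>k < 2 * n. card (?A k)) = (\<Prod>i < n. if in_span u (w i) then p * p else 1)"
    unfolding prod_lessThan_double by (intro prod.cong) (simp_all add: residues_mod_span_def)
  also have "\<dots> = (p * p) ^ card {i. i < n \<and> in_span u (w i)}"
    by (simp add: prod.If_cases Int_def lessThan_def)
  also have "(\<Prod>k \<in> {2 * n..<2 * n + m}. card (?A k)) = p ^ m"
    by (simp add: residues_mod_span_def)
  finally show ?thesis
    by (simp add: power_add power_mult_distrib power2_eq_square power_mult mult.commute)
qed

lemma iso_image_central:
  assumes "\<phi> \<in> iso (grp w) (grp w')" "\<And>i. i < n \<Longrightarrow> central (w' i) \<noteq> central (\<lambda>_. 0)"
  obtains u' where "\<phi> (central u) = central u'"
    and "card {i. i < n \<and> in_span u' (w' i)} = card {i. i < n \<and> in_span u (w i)}"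
proof -
  have "\<phi> (central u) \<in> center (grp w')"
    using range_central_subset_center by (intro iso_center[OF group_grp group_grp assms(1)]) blast
  then obtain u' where u': "\<phi> (central u) = central u'"
    using center_grp[OF assms(2)] by auto
  have "card (center_modulo (grp w') (central u')) = card (center_modulo (grp w) (central u))"
    using iso_card_center_modulo[OF group_grp group_grp assms(1) central_in_carrier[of u w]] u' by simp
  then have "card {i. i < n \<and> in_span u' (w' i)} = card {i. i < n \<and> in_span u (w i)}"
    using p_gt_1 by (simp add: card_center_modulo)
  with u' that show ?thesis
    by blast
qed

lemma central_scale_in_subgroup:
  assumes "subgroup S (grp w)" "t mod int p \<noteq> 0" "central (\<lambda>c. t * v c) \<in> S"
  shows "central v \<in> S"
proof -
  obtain s where s: "\<And>u. central (\<lambda>c. s * (t * u c)) = central u"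
    using central_scale_inverse[OF assms(2)] by blast
  have "central (\<lambda>c. t * v c) [^]\<^bsub>grp w\<^esub> s \<in> S"
    using group.subgroup_int_pow_closed[OF group_grp assms(1,3)] .
  then show ?thesis
    by (simp add: central_int_pow s)
qed

lemma central_add_in_subgroup:
  "subgroup S (grp w) \<Longrightarrow> central u \<in> S \<Longrightarrow> central v \<in> S \<Longrightarrow> central (\<lambda>c. u c + v c) \<in> S"
  by (metis central_mult subgroup.m_closed)

lemma central_diff_in_subgroup:
  assumes "subgroup S (grp w)" "central u \<in> S" "central v \<in> S"
  shows "central (\<lambda>c. u c - v c) \<in> S"
proof -
  have "central (\<lambda>c. - v c) \<in> S"
    using subgroup.m_inv_closed[OF assms(1,3)] by (simp add: central_inv)
  from central_add_in_subgroup[OF assms(1,2) this] show ?thesis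
    by simp
qed

lemma normal_contains_pair_commutator:
  assumes "N \<lhd> grp w" "encode f \<in> N" "i < n" "f (2 * i) mod int p \<noteq> 0"
  shows "central (w i) \<in> N"
proof -
  have "commutator (grp w) (encode f) (encode (unit_vec (2 * i + 1))) \<in> N"
    using group.normal_commutator_closed[OF group_grp assms(1,2)] by simp
  then have "central (\<lambda>c. f (2 * i) * w i c) \<in> N"
    using commutator_unit_odd[OF assms(3), of w f] by simp
  then show ?thesis
    using central_scale_in_subgroup normal_imp_subgroup[OF assms(1)] assms(4) by blast
qed

lemma pair_commutator_in_factor:
  assumes "H \<lhd> grp w" "K \<lhd> grp w" "H <#>\<^bsub>grp w\<^esub> K = carrier (grp w)" "i < n"
  shows "central (w i) \<in> H \<or> central (w i) \<in> K"
proof -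
  obtain h k where hk: "h \<in> H" "k \<in> K" "encode (unit_vec (2 * i)) = h \<otimes>\<^bsub>grp w\<^esub> k"
    using assms(3) encode_in_carrier unfolding set_mult_def by blast
  then obtain f g where fg: "h = encode f" "k = encode g"
    using assms(1,2) normal_imp_subgroup subgroup.subset by (metis carrier_grp imageE subsetD)
  then have "encode (unit_vec (2 * i)) = encode (vec_mult w f g)"
    using hk(3) by (simp add: encode_mult)
  then have "unit_vec (2 * i) (2 * i) mod int p = vec_mult w f g (2 * i) mod int p"
    using assms(4) unfolding encode_eq_iff by simp
  then have "(f (2 * i) + g (2 * i)) mod int p = 1"
    using assms(4) p_gt_1 by (simp add: unit_vec_def vec_mult_def)
  then have "f (2 * i) mod int p \<noteq> 0 \<or> g (2 * i) mod int p \<noteq> 0"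
    using mod_add_eq[of "f (2 * i)" "int p" "g (2 * i)"] by auto
  then show ?thesis
    using normal_contains_pair_commutator assms hk fg by blast
qed

lemma normal_trivial_if_center_disjoint:
  assumes "\<And>i. i < n \<Longrightarrow> central (w i) \<noteq> central (\<lambda>_. 0)"
    and "K \<lhd> grp w" "K \<inter> range central \<subseteq> {\<one>\<^bsub>grp w\<^esub>}"
  shows "K = {\<one>\<^bsub>grp w\<^esub>}"
proof -
  interpret group "grp w"
    by (rule group_grp)
  have K: "subgroup K (grp w)"
    using assms(2) normal_imp_subgroup by blast
  have "k \<in> center (grp w)" if k: "k \<in> K" for k
  proof -
    have k_carrier: "k \<in> carrier (grp w)"
      using K k subgroup.subset by blast
    have "commutator (grp w) k g = \<one>\<^bsub>grp w\<^esub>" if g: "g \<in> carrier (grp w)" for g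
    proof -
      have "commutator (grp w) k g \<in> K"
        using normal_commutator_closed[OF assms(2) k g] .
      moreover have "commutator (grp w) k g \<in> range central"
        using k_carrier g by (auto simp: carrier_grp commutator_encode)
      ultimately show ?thesis
        using assms(3) by blast
    qed
    then show ?thesis
      using k_carrier by (simp add: center_def commutator_eq_one_iff)
  qed
  then have "K \<subseteq> {\<one>\<^bsub>grp w\<^esub>}"
    using assms(3) center_grp[where w = w, OF assms(1)] by blast
  then show ?thesis
    using subgroup.one_closed[OF K] by blast
qed

end

locale plane_group = pair_group p 19 3 for p
begin

lemma one_mod_p [simp]: "1 mod int p = 1"
  using p_gt_1 by simp

definition frame_point :: "int \<Rightarrow> int \<Rightarrow> nat \<Rightarrow> nat \<Rightarrow> int" where
  "frame_point a b j c =
     (if j < 3 then (if c = j then 1 else 0)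
      else if j = 3 then 1
      else if c = 0 then 1 else if c = 1 then a else b)"

text \<open>
  Pair \<open>i\<close> has commutator \<open>frame_point a b (pair_point i)\<close>; the multiplicities 1, 2, 3, 4, 9 make
  the sums (at most one of 1, 2, 3, 4) + (0 or 9) pairwise distinct.
\<close>
definition pair_point :: "nat \<Rightarrow> nat" where
  "pair_point i =
     (if i < 1 then 0 else if i < 3 then 1 else if i < 6 then 2 else if i < 10 then 3 else 4)"

definition frame_grp :: "int \<Rightarrow> int \<Rightarrow> nat monoid" where
  "frame_grp a b = grp (\<lambda>i. frame_point a b (pair_point i))"

definition point_weight :: "(nat \<Rightarrow> bool) \<Rightarrow> nat" where
  "point_weight P = (if P 0 then 1 else 0) + (if P 1 then 2 else 0) + (if P 2 then 3 else 0)
     + (if P 3 then 4 else 0) + (if P 4 then 9 else 0)"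

lemma frame_point_indep_params: "j < 4 \<Longrightarrow> frame_point a b j = frame_point a' b' j"
  by (rule ext) (simp add: frame_point_def)

lemma frame_point_ne_zero: "central (frame_point a b j) \<noteq> central (\<lambda>_. 0)"
proof
  assume "central (frame_point a b j) = central (\<lambda>_. 0)"
  then have "frame_point a b j c mod int p = 0" if "c < 3" for c
    using that by (simp add: central_eq_iff)
  from this[of "if j < 3 then j else 0"] show False
    by (cases "j < 3"; cases "j = 3") (simp_all add: frame_point_def)
qed

lemma frame_points_not_collinear:
  assumes "j < 4" "j' < 4" "j \<noteq> j'"
  shows "\<not> in_span (frame_point a b j) (frame_point a b j')"
proof
  assume "in_span (frame_point a b j) (frame_point a b j')"
  then obtain k where "\<forall>c<3. frame_point a b j' c mod int p = (k * frame_point a b j c) mod int p"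
    by (auto simp: in_span_def central_eq_iff)
  moreover have "j \<in> {0, 1, 2, 3}" "j' \<in> {0, 1, 2, 3}"
    using assms(1,2) by auto
  ultimately show False
    using assms(3) by (auto simp: all_less_three frame_point_def)
qed

lemma at_most_one_frame_point_in_span:
  assumes "j < 4" "j' < 4" "in_span u (frame_point a b j)" "in_span u (frame_point a b j')"
  shows "j = j'"
proof (rule ccontr)
  assume "j \<noteq> j'"
  have "in_span (frame_point a b j) u"
    using in_span_sym[OF frame_point_ne_zero assms(3)] .
  then have "in_span (frame_point a b j) (frame_point a b j')"
    using assms(4) by (rule in_span_trans)
  with frame_points_not_collinear[OF assms(1,2) \<open>j \<noteq> j'\<close>] show False
    by contradiction
qed

lemma card_pair_point: "card {i. i < 19 \<and> P (pair_point i)} = point_weight P"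
proof -
  have "card {i. i < 19 \<and> P (pair_point i)} = (\<Sum>i<19. if P (pair_point i) then 1 else 0)"
    by (simp add: sum.If_cases Int_def lessThan_def)
  also have "\<dots> = point_weight P"
    by (simp add: numeral_eq_Suc pair_point_def point_weight_def)
  finally show ?thesis .
qed

lemma point_weight_decode:
  assumes "\<And>j j'. j < 4 \<Longrightarrow> j' < 4 \<Longrightarrow> P j \<Longrightarrow> P j' \<Longrightarrow> j = j'" "j < 5"
  shows "P j \<longleftrightarrow> (if j = 4 then 9 \<le> point_weight P else point_weight P mod 9 = j + 1)"
proof -
  have "\<not> (P 0 \<and> P 1)" "\<not> (P 0 \<and> P 2)" "\<not> (P 0 \<and> P 3)"
    "\<not> (P 1 \<and> P 2)" "\<not> (P 1 \<and> P 3)" "\<not> (P 2 \<and> P 3)"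
    using assms(1)[of 0 1] assms(1)[of 0 2] assms(1)[of 0 3]
      assms(1)[of 1 2] assms(1)[of 1 3] assms(1)[of 2 3] by auto
  moreover have "j \<in> {0, 1, 2, 3, 4}"
    using assms(2) by auto
  ultimately show ?thesis
    unfolding point_weight_def by (auto split: if_splits)
qed

lemma point_weight_inj:
  assumes "\<And>j j'. j < 4 \<Longrightarrow> j' < 4 \<Longrightarrow> P j \<Longrightarrow> P j' \<Longrightarrow> j = j'"
    and "\<And>j j'. j < 4 \<Longrightarrow> j' < 4 \<Longrightarrow> Q j \<Longrightarrow> Q j' \<Longrightarrow> j = j'"
    and "point_weight P = point_weight Q" "j < 5"
  shows "P j \<longleftrightarrow> Q j"
  using point_weight_decode[of P, OF assms(1,4)] point_weight_decode[of Q, OF assms(2,4)] assms(3)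
  by simp

lemma iso_frame_incidence:
  assumes "\<phi> \<in> iso (frame_grp a b) (frame_grp a' b')" "\<phi> (central u) = central u'" "j < 5"
  shows "in_span u' (frame_point a' b' j) \<longleftrightarrow> in_span u (frame_point a b j)"
proof -
  obtain u'' where u'': "\<phi> (central u) = central u''"
    and "card {i. i < 19 \<and> in_span u'' (frame_point a' b' (pair_point i))}
      = card {i. i < 19 \<and> in_span u (frame_point a b (pair_point i))}"
    using iso_image_central[OF assms(1)[unfolded frame_grp_def] frame_point_ne_zero] by blast
  moreover have "in_span u'' x \<longleftrightarrow> in_span u' x" for x
    using in_span_cong_left[of u'' u'] in_span_cong_left[of u' u''] u'' assms(2) by auto
  ultimately have "point_weight (\<lambda>j. in_span u' (frame_point a' b' j))
      = point_weight (\<lambda>j. in_span u (frame_point a b j))"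
    by (simp add: card_pair_point[of "\<lambda>j. in_span _ (frame_point _ _ j)"])
  then show ?thesis
    using at_most_one_frame_point_in_span assms(3) by (intro point_weight_inj) blast+
qed

lemma iso_frame_point_scaled:
  assumes "\<phi> \<in> iso (frame_grp a b) (frame_grp a' b')" "j < 4"
  obtains s where "\<phi> (central (frame_point a b j)) = central (\<lambda>c. s * frame_point a b j c)"
proof -
  obtain u' where u': "\<phi> (central (frame_point a b j)) = central u'"
    using iso_image_central[OF assms(1)[unfolded frame_grp_def] frame_point_ne_zero] by blast
  have "in_span u' (frame_point a' b' j)"
    using iso_frame_incidence[OF assms(1) u'] assms(2) in_span_self by simp
  then have "in_span u' (frame_point a b j)"
    using frame_point_indep_params[OF assms(2), of a' b' a b] by simp
  then have "in_span (frame_point a b j) u'"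
    by (rule in_span_sym[OF frame_point_ne_zero])
  then show ?thesis
    using u' that by (auto simp: in_span_def)
qed

lemma central_in_frame_grp [simp]: "central u \<in> carrier (frame_grp a b)"
  by (simp add: frame_grp_def)

lemma central_frame_decomposition:
  "central v = central (frame_point a b 0) [^]\<^bsub>grp w\<^esub> v 0 \<otimes>\<^bsub>grp w\<^esub> central (frame_point a b 1) [^]\<^bsub>grp w\<^esub> v 1
     \<otimes>\<^bsub>grp w\<^esub> central (frame_point a b 2) [^]\<^bsub>grp w\<^esub> v 2"
  by (simp add: central_int_pow central_mult central_eq_iff all_less_three frame_point_def)

lemma iso_frame_common_scalar:
  assumes "\<phi> \<in> iso (frame_grp a b) (frame_grp a' b')"
  obtains s where "\<And>j. j < 3 \<Longrightarrow> \<phi> (central (frame_point a b j)) = central (\<lambda>c. s * frame_point a b j c)"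
proof -
  interpret hom: group_hom "frame_grp a b" "frame_grp a' b'" \<phi>
    using assms group_grp by (simp add: frame_grp_def group_hom_def group_hom_axioms_def iso_def)
  let ?e = "frame_point a b"
  obtain s0 where s0: "\<phi> (central (?e 0)) = central (\<lambda>c. s0 * ?e 0 c)"
    using iso_frame_point_scaled[OF assms, where j = 0] by auto
  obtain s1 where s1: "\<phi> (central (?e 1)) = central (\<lambda>c. s1 * ?e 1 c)"
    using iso_frame_point_scaled[OF assms, where j = 1] by auto
  obtain s2 where s2: "\<phi> (central (?e 2)) = central (\<lambda>c. s2 * ?e 2 c)"
    using iso_frame_point_scaled[OF assms, where j = 2] by auto
  obtain s where s: "\<phi> (central (?e 3)) = central (\<lambda>c. s * ?e 3 c)"
    using iso_frame_point_scaled[OF assms, where j = 3] by auto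
  have "central (?e 3) = central (?e 0) \<otimes>\<^bsub>frame_grp a b\<^esub> central (?e 1) \<otimes>\<^bsub>frame_grp a b\<^esub> central (?e 2)"
    by (simp add: frame_grp_def central_mult central_eq_iff all_less_three frame_point_def)
  then have "\<phi> (central (?e 3))
      = \<phi> (central (?e 0)) \<otimes>\<^bsub>frame_grp a' b'\<^esub> \<phi> (central (?e 1)) \<otimes>\<^bsub>frame_grp a' b'\<^esub> \<phi> (central (?e 2))"
    by simp
  then have "central (\<lambda>c. s * ?e 3 c) = central (\<lambda>c. s0 * ?e 0 c + s1 * ?e 1 c + s2 * ?e 2 c)"
    unfolding s0 s1 s2 s by (simp add: frame_grp_def central_mult)
  then have same: "s0 mod int p = s mod int p" "s1 mod int p = s mod int p" "s2 mod int p = s mod int p"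
    by (simp_all add: central_eq_iff all_less_three frame_point_def)
  have "\<phi> (central (?e j)) = central (\<lambda>c. s * ?e j c)" if "j < 3" for j
  proof -
    have "j = 0 \<or> j = 1 \<or> j = 2"
      using that by auto
    then show ?thesis
      using s0 s1 s2 central_scale_mod_cong[OF same(1), of "?e 0"] central_scale_mod_cong[OF same(2), of "?e 1"]
        central_scale_mod_cong[OF same(3), of "?e 2"]
      by auto
  qed
  then show ?thesis
    using that by blast
qed

lemma iso_frame_scalar:
  assumes "\<phi> \<in> iso (frame_grp a b) (frame_grp a' b')"
  obtains s where "\<And>v. \<phi> (central v) = central (\<lambda>c. s * v c)"
proof -
  interpret hom: group_hom "frame_grp a b" "frame_grp a' b'" \<phi>
    using assms group_grp by (simp add: frame_grp_def group_hom_def group_hom_axioms_def iso_def)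
  let ?e = "frame_point a b"
  obtain s where scaled: "\<And>j. j < 3 \<Longrightarrow> \<phi> (central (?e j)) = central (\<lambda>c. s * ?e j c)"
    using iso_frame_common_scalar[OF assms] by blast
  have "\<phi> (central v) = central (\<lambda>c. s * v c)" for v
  proof -
    have "\<phi> (central v) = \<phi> (central (?e 0)) [^]\<^bsub>frame_grp a' b'\<^esub> v 0
        \<otimes>\<^bsub>frame_grp a' b'\<^esub> \<phi> (central (?e 1)) [^]\<^bsub>frame_grp a' b'\<^esub> v 1
        \<otimes>\<^bsub>frame_grp a' b'\<^esub> \<phi> (central (?e 2)) [^]\<^bsub>frame_grp a' b'\<^esub> v 2"
      by (subst central_frame_decomposition[where v = v and a = a and b = b
            and w = "\<lambda>i. frame_point a b (pair_point i)", folded frame_grp_def])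
        (simp add: hom.hom_int_pow)
    also have "\<dots> = central (\<lambda>c. s * v c)"
      by (simp add: scaled frame_grp_def central_int_pow central_mult central_eq_iff all_less_three
          frame_point_def mult.commute)
    finally show ?thesis .
  qed
  then show ?thesis
    using that by blast
qed

lemma iso_frame_params:
  assumes "\<phi> \<in> iso (frame_grp a b) (frame_grp a' b')"
  shows "a mod int p = a' mod int p \<and> b mod int p = b' mod int p"
proof -
  obtain s where s: "\<And>v. \<phi> (central v) = central (\<lambda>c. s * v c)"
    using iso_frame_scalar[OF assms] by blast
  have "in_span (\<lambda>c. s * frame_point a b 4 c) (frame_point a' b' 4)"
    using iso_frame_incidence[OF assms s] in_span_self by simp
  then obtain k where "\<forall>c<3. frame_point a' b' 4 c mod int p = (k * (s * frame_point a b 4 c)) mod int p"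
    by (auto simp: in_span_def central_eq_iff)
  then have ks: "(k * s) mod int p = 1" and "a' mod int p = (k * s * a) mod int p"
    and "b' mod int p = (k * s * b) mod int p"
    by (simp_all add: all_less_three frame_point_def mult.assoc)
  moreover have "(k * s * x) mod int p = x mod int p" for x
    using mod_mult_left_eq[of "k * s" "int p" x] ks by simp
  ultimately show ?thesis
    by simp
qed

lemma center_in_subgroup_of_frame_points:
  assumes "subgroup S (grp w)" "j < 4" "\<And>j'. j' < 4 \<Longrightarrow> j' \<noteq> j \<Longrightarrow> central (frame_point a b j') \<in> S"
  shows "range central \<subseteq> S"
proof -
  have axis: "central (frame_point a b c) \<in> S" if "c < 3" for c
  proof (cases "c = j")
    case False
    then show ?thesis
      using assms(3) that by simp
  next
    case True
    let ?c1 = "(c + 1) mod 3" and ?c2 = "(c + 2) mod 3"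
    have "central (\<lambda>x. frame_point a b 3 x - frame_point a b ?c1 x - frame_point a b ?c2 x) \<in> S"
      using True that by (intro central_diff_in_subgroup[OF assms(1)] assms(3); presburger)
    moreover have "central (\<lambda>x. frame_point a b 3 x - frame_point a b ?c1 x - frame_point a b ?c2 x)
        = central (frame_point a b c)"
    proof -
      have "c = 0 \<or> c = 1 \<or> c = 2"
        using that by auto
      then show ?thesis
        by (elim disjE) (simp_all add: central_eq_iff all_less_three frame_point_def)
    qed
    ultimately show ?thesis
      by simp
  qed
  show ?thesis
  proof
    fix x assume "x \<in> range central"
    then obtain v where "x = central v"
      by blast
    moreover have "central (frame_point a b 0) [^]\<^bsub>grp w\<^esub> v 0 \<otimes>\<^bsub>grp w\<^esub> central (frame_point a b 1) [^]\<^bsub>grp w\<^esub> v 1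
        \<otimes>\<^bsub>grp w\<^esub> central (frame_point a b 2) [^]\<^bsub>grp w\<^esub> v 2 \<in> S"
      using axis group.subgroup_int_pow_closed[OF group_grp assms(1)] subgroup.m_closed[OF assms(1)]
      by simp
    ultimately show "x \<in> S"
      using central_frame_decomposition[where v = v and a = a and b = b and w = w] by simp
  qed
qed

lemma frame_points_not_separated:
  assumes "subgroup S (grp w)" "subgroup T (grp w)" "S \<inter> T = {\<one>\<^bsub>grp w\<^esub>}"
  shows "\<not> (central (frame_point a b 0) \<in> S \<and> central (frame_point a b 1) \<in> S \<and>
             central (frame_point a b 2) \<in> T \<and> central (frame_point a b 3) \<in> T)"
    and "\<not> (central (frame_point a b 0) \<in> S \<and> central (frame_point a b 2) \<in> S \<and>
             central (frame_point a b 1) \<in> T \<and> central (frame_point a b 3) \<in> T)"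
    and "\<not> (central (frame_point a b 0) \<in> S \<and> central (frame_point a b 3) \<in> S \<and>
             central (frame_point a b 1) \<in> T \<and> central (frame_point a b 2) \<in> T)"
proof -
  \<comment> \<open>With \<open>e\<^sub>3 = e\<^sub>0 + e\<^sub>1 + e\<^sub>2\<close>: \<open>e\<^sub>0 + e\<^sub>1 = e\<^sub>3 - e\<^sub>2\<close>, \<open>e\<^sub>0 + e\<^sub>2 = e\<^sub>3 - e\<^sub>1\<close> and \<open>e\<^sub>3 - e\<^sub>0 = e\<^sub>1 + e\<^sub>2\<close> would be nontrivial elements of \<open>S \<inter> T\<close>.\<close>
  have common: "False" if "central u \<in> S" "central v \<in> T" "central u = central v" "central u \<noteq> central (\<lambda>_. 0)" for u v
    using that assms(3) by (auto simp: one_eq_central)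
  show "\<not> (central (frame_point a b 0) \<in> S \<and> central (frame_point a b 1) \<in> S \<and>
             central (frame_point a b 2) \<in> T \<and> central (frame_point a b 3) \<in> T)"
  proof (intro notI, elim conjE)
    assume h: "central (frame_point a b 0) \<in> S" "central (frame_point a b 1) \<in> S"
      "central (frame_point a b 2) \<in> T" "central (frame_point a b 3) \<in> T"
    from central_add_in_subgroup[OF assms(1) h(1,2)] central_diff_in_subgroup[OF assms(2) h(4,3)] show False
      by (rule common) (auto simp: central_eq_iff all_less_three frame_point_def)
  qed
  show "\<not> (central (frame_point a b 0) \<in> S \<and> central (frame_point a b 2) \<in> S \<and>
             central (frame_point a b 1) \<in> T \<and> central (frame_point a b 3) \<in> T)"
  proof (intro notI, elim conjE)
    assume h: "central (frame_point a b 0) \<in> S" "central (frame_point a b 2) \<in> S"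
      "central (frame_point a b 1) \<in> T" "central (frame_point a b 3) \<in> T"
    from central_add_in_subgroup[OF assms(1) h(1,2)] central_diff_in_subgroup[OF assms(2) h(4,3)] show False
      by (rule common) (auto simp: central_eq_iff all_less_three frame_point_def)
  qed
  show "\<not> (central (frame_point a b 0) \<in> S \<and> central (frame_point a b 3) \<in> S \<and>
             central (frame_point a b 1) \<in> T \<and> central (frame_point a b 2) \<in> T)"
  proof (intro notI, elim conjE)
    assume h: "central (frame_point a b 0) \<in> S" "central (frame_point a b 3) \<in> S"
      "central (frame_point a b 1) \<in> T" "central (frame_point a b 2) \<in> T"
    from central_diff_in_subgroup[OF assms(1) h(2,1)] central_add_in_subgroup[OF assms(2) h(3,4)] show False
      by (rule common) (auto simp: central_eq_iff all_less_three frame_point_def)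
  qed
qed

lemma center_in_frame_factor:
  assumes "subgroup S (grp w)" "subgroup T (grp w)" "S \<inter> T = {\<one>\<^bsub>grp w\<^esub>}"
    and "\<And>j. j < 4 \<Longrightarrow> central (frame_point a b j) \<in> S \<or> central (frame_point a b j) \<in> T"
  shows "range central \<subseteq> S \<or> range central \<subseteq> T"
proof -
  let ?e = "\<lambda>j. central (frame_point a b j)"
  have three: "range central \<subseteq> U"
    if "subgroup U (grp w)" "j < 4" "\<forall>j' \<in> {0, 1, 2, 3} - {j}. ?e j' \<in> U" for U j
  proof (rule center_in_subgroup_of_frame_points[OF that(1,2)])
    fix j' assume "j' < 4" "j' \<noteq> j"
    then have "j' \<in> {0, 1, 2, 3} - {j}"
      by auto
    then show "?e j' \<in> U"
      using that(3) by blast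
  qed
  have "?e 1 \<in> U \<Longrightarrow> ?e 2 \<in> U \<Longrightarrow> ?e 3 \<in> U \<Longrightarrow> range central \<subseteq> U"
    "?e 0 \<in> U \<Longrightarrow> ?e 2 \<in> U \<Longrightarrow> ?e 3 \<in> U \<Longrightarrow> range central \<subseteq> U"
    "?e 0 \<in> U \<Longrightarrow> ?e 1 \<in> U \<Longrightarrow> ?e 3 \<in> U \<Longrightarrow> range central \<subseteq> U"
    "?e 0 \<in> U \<Longrightarrow> ?e 1 \<in> U \<Longrightarrow> ?e 2 \<in> U \<Longrightarrow> range central \<subseteq> U"
    if "subgroup U (grp w)" for U
    using three[OF that, of 0] three[OF that, of 1] three[OF that, of 2] three[OF that, of 3]
    by (simp_all add: insert_Diff_if)
  note three_in_S = this[OF assms(1)] and three_in_T = this[OF assms(2)]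
  have "T \<inter> S = {\<one>\<^bsub>grp w\<^esub>}"
    using assms(3) by blast
  note separated = frame_points_not_separated[OF assms(1-3), where a = a and b = b]
    frame_points_not_separated[OF assms(2,1) this, where a = a and b = b]
  have "?e 0 \<in> S \<or> ?e 0 \<in> T" "?e 1 \<in> S \<or> ?e 1 \<in> T" "?e 2 \<in> S \<or> ?e 2 \<in> T"
    "?e 3 \<in> S \<or> ?e 3 \<in> T"
    using assms(4) by simp_all
  then show ?thesis
    using three_in_S three_in_T separated by argo
qed

lemma pair_point_surj: "j < 5 \<Longrightarrow> \<exists>i < 19. pair_point i = j"
proof -
  assume "j < 5"
  then have "j \<in> pair_point ` {0, 1, 3, 6, 10}"
    by (auto simp: pair_point_def less_Suc_eq numeral_eq_Suc)
  then show ?thesis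
    by force
qed

lemma indecomposable_frame_grp: "indecomposable (frame_grp a b)"
  unfolding indecomposable_def
proof (intro conjI notI)
  assume "carrier (frame_grp a b) = {\<one>\<^bsub>frame_grp a b\<^esub>}"
  then have "central (frame_point a b 0) = central (\<lambda>_. 0)"
    using central_in_frame_grp[of "frame_point a b 0" a b] by (simp add: frame_grp_def one_eq_central)
  then show False
    using frame_point_ne_zero by blast
next
  let ?G = "grp (\<lambda>i. frame_point a b (pair_point i))"
  assume "\<exists>H K. H \<lhd> frame_grp a b \<and> K \<lhd> frame_grp a b \<and> H \<inter> K = {\<one>\<^bsub>frame_grp a b\<^esub>} \<and>
      H <#>\<^bsub>frame_grp a b\<^esub> K = carrier (frame_grp a b) \<and>
      H \<noteq> {\<one>\<^bsub>frame_grp a b\<^esub>} \<and> K \<noteq> {\<one>\<^bsub>frame_grp a b\<^esub>}"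
  then obtain H K where H: "H \<lhd> ?G" and K: "K \<lhd> ?G" and HK: "H \<inter> K = {\<one>\<^bsub>?G\<^esub>}"
    and product: "H <#>\<^bsub>?G\<^esub> K = carrier ?G" and "H \<noteq> {\<one>\<^bsub>?G\<^esub>}" "K \<noteq> {\<one>\<^bsub>?G\<^esub>}"
    unfolding frame_grp_def by blast
  have "central (frame_point a b j) \<in> H \<or> central (frame_point a b j) \<in> K" if j: "j < 4" for j
  proof -
    obtain i where "i < 19" "pair_point i = j"
      using pair_point_surj[of j] j by auto
    then show ?thesis
      using pair_commutator_in_factor[OF H K product] by blast
  qed
  then have "range central \<subseteq> H \<or> range central \<subseteq> K"
    using center_in_frame_factor[OF normal_imp_subgroup[OF H] normal_imp_subgroup[OF K] HK] by blast
  moreover have "H = {\<one>\<^bsub>?G\<^esub>}" if "range central \<subseteq> K"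
    using normal_trivial_if_center_disjoint[OF frame_point_ne_zero H] HK that by blast
  moreover have "K = {\<one>\<^bsub>?G\<^esub>}" if "range central \<subseteq> H"
    using normal_trivial_if_center_disjoint[OF frame_point_ne_zero K] HK that by blast
  ultimately show False
    using \<open>H \<noteq> {\<one>\<^bsub>?G\<^esub>}\<close> \<open>K \<noteq> {\<one>\<^bsub>?G\<^esub>}\<close> by blast
qed

end

theorem corollary4:
  fixes p :: nat
  assumes "Factorial_Ring.prime p"
  shows "\<exists>Gs :: nat \<Rightarrow> nat monoid.
           (\<forall>i < p ^ 2. group (Gs i) \<and> order (Gs i) = p ^ 41 \<and>
                          metabelian (Gs i) \<and> indecomposable (Gs i)) \<and>
           (\<forall>i < p ^ 2. \<forall>j < p ^ 2. i \<noteq> j \<longrightarrow> \<not> (Gs i \<cong> Gs j))"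
proof -
  interpret plane_group p
    by unfold_locales (fact assms)
  define Gs where "Gs i = frame_grp (int (i div p)) (int (i mod p))" for i
  have "group (Gs i) \<and> order (Gs i) = p ^ 41 \<and> metabelian (Gs i) \<and> indecomposable (Gs i)" for i
    using indecomposable_frame_grp
    by (simp add: Gs_def frame_grp_def group_grp order_grp metabelian_grp)
  moreover have "\<not> (Gs i \<cong> Gs j)" if "i < p ^ 2" "j < p ^ 2" "i \<noteq> j" for i j
  proof
    assume "Gs i \<cong> Gs j"
    then obtain \<phi> where "\<phi> \<in> iso (Gs i) (Gs j)"
      by (auto simp: is_iso_def)
    then have "int (i div p) mod int p = int (j div p) mod int p \<and> int (i mod p) mod int p = int (j mod p) mod int p"
      unfolding Gs_def by (rule iso_frame_params)
    moreover have "i div p < p" "j div p < p"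
      using that(1,2) by (simp_all add: power2_eq_square less_mult_imp_div_less)
    ultimately have "i div p = j div p" "i mod p = j mod p"
      by (simp_all flip: of_nat_mod)
    then show False
      using that(3) by (metis div_mult_mod_eq)
  qed
  ultimately show ?thesis
    by blast
qed

end
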